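(* Let $L:\mathbb{R}^d\to\mathbb{R}^{\mathcal{Y}}_+$ be a polyhedral loss, $\ell:\mathcal{R}\to\mathbb{R}^{\mathcal{Y}}_+$ a discrete loss, $\|\cdot\|$ a norm on $\mathbb{R}^d$, and $\psi:\mathbb{R}^d\to\mathcal{R}$ a link. Then $(L,\psi)$ is calibrated with respect to $\ell$ if and only if there exists $\epsilon>0$ such that $\psi$ is produced by the general $\epsilon$-thickened link construction for $L$, $\mathrm{prop}[\ell]$, $\epsilon$, $\|\cdot\|$.
   Context: $\mathcal{Y}$ is a finite label set, $\Delta_{\mathcal{Y}}$ the simplex, $\mathbb{R}^{\mathcal{Y}}_+$ the nonnegative orthant. A loss $L:\mathcal{R}\to\mathbb{R}^{\mathcal{Y}}_+$ is discrete if $\mathcal{R}$ is finite; $L:\mathbb{R}^d\to\mathbb{R}^{\mathcal{Y}}_+$ is polyhedral if each coordinate is a max of finitely many affine functions. For losses whose expected loss $\langle p,L(\cdot)\rangle$ attains its minimum for each $p$ (true for polyhedral and discrete losses), $\mathrm{prop}[L](p)=\arg\min_r\langle p,L(r)\rangle$, with level sets $\mathrm{prop}[L]_r=\{p:r\in\mathrm{prop}[L](p)\}$. $L$ indirectly elicits $\gamma$ if for all $u$ there is $r$ with $\mathrm{prop}[L]_u\subseteq\gamma_r$. Calibration: for all $p$, $\inf_{u:\psi(u)\notin\mathrm{prop}[\ell](p)}\langle p,L(u)\rangle>\inf_u\langle p,L(u)\rangle$. General $\epsilon$-thickened link construction for a polyhedral $L$, a finite property $\gamma:\Delta_{\mathcal{Y}}\rightrightarrows\mathcal{R}$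 indirectly elicited by $L$, $\epsilon>0$ and a norm $\|\cdot\|$: let $\Gamma=\mathrm{prop}[L]$, $\mathcal{U}=\{\Gamma(p):p\in\Delta_{\mathcal{Y}}\}$, $\Gamma_U=\{p:\Gamma(p)=U\}$ and $R_U=\{r\in\mathcal{R}:\Gamma_U\subseteq\gamma_r\}$ for $U\in\mathcal{U}$. Initialize $\Psi(u)=\mathcal{R}$ for all $u$; for each $U\in\mathcal{U}$ and each $u$ with $\inf_{u^*\in U}\|u^*-u\|<\epsilon$ set $\Psi(u)\leftarrow\Psi(u)\cap R_U$. If $\Psi(u)\neq\emptyset$ for all $u$, the construction produces exactly the links $\psi$ with $\psi(u)\in\Psi(u)$ for all $u$. *)

theory Defs
  imports "HOL-Analysis.Analysis"
begin

text \<open>Label set: a finite type 'y. Surrogate space R^d: real^'d. Report set of the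
discrete loss: a finite type 'r. Losses are vector-valued in R^Y, i.e. functions into 'y => real.\<close>

definition prob_simplex :: "('y::finite \<Rightarrow> real) set" where
  "prob_simplex = {p. (\<forall>y. 0 \<le> p y) \<and> sum p UNIV = 1}"

definition expected :: "('y::finite \<Rightarrow> real) \<Rightarrow> ('y \<Rightarrow> real) \<Rightarrow> real" where
  "expected p v = (\<Sum>y\<in>UNIV. p y * v y)"

definition is_norm :: "('a::real_vector \<Rightarrow> real) \<Rightarrow> bool" where
  "is_norm N \<longleftrightarrow> (\<forall>x. 0 \<le> N x) \<and> (\<forall>x. N x = 0 \<longleftrightarrow> x = 0)
     \<and> (\<forall>c x. N (c *\<^sub>R x) = \<bar>c\<bar> * N x) \<and> (\<forall>x y. N (x + y) \<le> N x + N y)"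

definition nonneg_loss :: "('a \<Rightarrow> 'y \<Rightarrow> real) \<Rightarrow> bool" where
  "nonneg_loss L \<longleftrightarrow> (\<forall>u y. 0 \<le> L u y)"

definition polyhedral_loss :: "(real^'d \<Rightarrow> 'y \<Rightarrow> real) \<Rightarrow> bool" where
  "polyhedral_loss L \<longleftrightarrow> nonneg_loss L \<and>
     (\<forall>y. \<exists>S :: ((real^'d) \<times> real) set. finite S \<and> S \<noteq> {} \<and>
          (\<forall>u. L u y = Max ((\<lambda>(a,b). a \<bullet> u + b) ` S)))"

text \<open>Discrete loss: finite report set (the type 'r is finite), nonnegative values.\<close>
definition discrete_loss :: "('r::finite \<Rightarrow> 'y \<Rightarrow> real) \<Rightarrow> bool" where
  "discrete_loss l \<longleftrightarrow> nonneg_loss l"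

definition prop_of :: "('a \<Rightarrow> 'y::finite \<Rightarrow> real) \<Rightarrow> ('y \<Rightarrow> real) \<Rightarrow> 'a set" where
  "prop_of L p = {r. \<forall>r'. expected p (L r) \<le> expected p (L r')}"

definition level_set :: "(('y::finite \<Rightarrow> real) \<Rightarrow> 'a set) \<Rightarrow> 'a \<Rightarrow> ('y \<Rightarrow> real) set" where
  "level_set \<gamma> r = {p \<in> prob_simplex. r \<in> \<gamma> p}"

definition indirectly_elicits ::
  "('a \<Rightarrow> 'y::finite \<Rightarrow> real) \<Rightarrow> (('y \<Rightarrow> real) \<Rightarrow> 'r set) \<Rightarrow> bool" where
  "indirectly_elicits L \<gamma> \<longleftrightarrow> (\<forall>u. \<exists>r. level_set (prop_of L) u \<subseteq> level_set \<gamma> r)"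

text \<open>Calibration of (L, psi) w.r.t. l; infima taken in the extended reals (inf of empty = +inf).\<close>
definition calibrated ::
  "('a \<Rightarrow> 'y::finite \<Rightarrow> real) \<Rightarrow> ('a \<Rightarrow> 'r) \<Rightarrow> ('r \<Rightarrow> 'y \<Rightarrow> real) \<Rightarrow> bool" where
  "calibrated L \<psi> l \<longleftrightarrow> (\<forall>p\<in>prob_simplex.
     (INF u\<in>{u. \<psi> u \<notin> prop_of l p}. ereal (expected p (L u))) > (INF u. ereal (expected p (L u))))"

definition cells :: "('a \<Rightarrow> 'y::finite \<Rightarrow> real) \<Rightarrow> 'a set set" where
  "cells L = {prop_of L p | p. p \<in> prob_simplex}"

definition cell_region :: "('a \<Rightarrow> 'y::finite \<Rightarrow> real) \<Rightarrow> 'a set \<Rightarrow> ('y \<Rightarrow> real) set" where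
  "cell_region L U = {p \<in> prob_simplex. prop_of L p = U}"

definition cell_reports ::
  "('a \<Rightarrow> 'y::finite \<Rightarrow> real) \<Rightarrow> (('y \<Rightarrow> real) \<Rightarrow> 'r set) \<Rightarrow> 'a set \<Rightarrow> 'r set" where
  "cell_reports L \<gamma> U = {r. cell_region L U \<subseteq> level_set \<gamma> r}"

definition thick_Psi ::
  "('a::real_vector \<Rightarrow> 'y::finite \<Rightarrow> real) \<Rightarrow> (('y \<Rightarrow> real) \<Rightarrow> 'r set) \<Rightarrow> real
     \<Rightarrow> ('a \<Rightarrow> real) \<Rightarrow> 'a \<Rightarrow> 'r set" where
  "thick_Psi L \<gamma> \<epsilon> N u =
     UNIV \<inter> (\<Inter>{cell_reports L \<gamma> U | U. U \<in> cells L \<and> (INF us\<in>U. ereal (N (us - u))) < ereal \<epsilon>})"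

definition produced_by_thickened_link ::
  "('a::real_vector \<Rightarrow> 'y::finite \<Rightarrow> real) \<Rightarrow> (('y \<Rightarrow> real) \<Rightarrow> 'r set) \<Rightarrow> real
     \<Rightarrow> ('a \<Rightarrow> real) \<Rightarrow> ('a \<Rightarrow> 'r) \<Rightarrow> bool" where
  "produced_by_thickened_link L \<gamma> \<epsilon> N \<psi> \<longleftrightarrow>
     indirectly_elicits L \<gamma> \<and> 0 < \<epsilon> \<and> is_norm N \<and>
     (\<forall>u. thick_Psi L \<gamma> \<epsilon> N u \<noteq> {}) \<and> (\<forall>u. \<psi> u \<in> thick_Psi L \<gamma> \<epsilon> N u)"

end

theory Submission
  imports Defs
begin

text \<open>
  Fix \<open>p\<close> in the simplex. The expected surrogate loss \<open>u \<mapsto> \<langle>p, L u\<rangle>\<close> is again a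
  maximum of finitely many affine functions. Such a function is Lipschitz and, when bounded below,
  has a well-posed minimum: for every \<open>\<epsilon> > 0\<close> there is \<open>\<delta> > 0\<close> such that every \<open>u\<close> whose
  value is within \<open>\<delta>\<close> of the minimum lies within \<open>\<epsilon>\<close> of a minimiser. This is proved by
  induction on the number of pieces: either some direction lowers a piece without raising any
  other, and one passes to the pieces that are constant along it, or the function grows
  linearly on the span of the slopes and is invariant orthogonally to it, so compactness applies.

  Calibration at \<open>p\<close> asks that every \<open>u\<close> linked outside \<open>prop[\<ell>](p)\<close> has expected loss at
  least the minimum plus some \<open>\<delta> > 0\<close>; the thickened link asks that every such \<open>u\<close> stays at
  \<open>N\<close>-distance at least \<open>\<epsilon>\<close> from \<open>prop[L](p)\<close>. Lipschitz continuity turns the first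
  condition into the second and well-posedness turns the second into the first. A single
  \<open>\<epsilon>\<close> serves all \<open>p\<close> because \<open>prop[L]\<close> takes only finitely many values: on each of the
  finitely many polyhedra on which a fixed choice of pieces is active the expected loss is
  affine, so each value of \<open>prop[L]\<close> meets such a polyhedron in one of its finitely many faces.
\<close>

section \<open>Maxima of finitely many affine functions\<close>

definition max_affine :: "('a::real_inner \<times> real) set \<Rightarrow> 'a \<Rightarrow> real" where
  "max_affine S u = Max ((\<lambda>(a, b). a \<bullet> u + b) ` S)"

lemma max_affine_ge:
  assumes "finite S" "(c, e) \<in> S"
  shows "c \<bullet> u + e \<le> max_affine S u"
  unfolding max_affine_def using assms by (intro Max_ge) force+

lemma max_affine_attained:
  assumes "finite S" "S \<noteq> {}"
  obtains c e where "(c, e) \<in> S" "max_affine S u = c \<bullet> u + e"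
proof -
  have "max_affine S u \<in> (\<lambda>(a, b). a \<bullet> u + b) ` S"
    unfolding max_affine_def using assms by (intro Max_in) auto
  then show ?thesis using that by auto
qed

lemma max_affine_le:
  assumes "finite S" "S \<noteq> {}" "\<And>c e. (c, e) \<in> S \<Longrightarrow> c \<bullet> u + e \<le> M"
  shows "max_affine S u \<le> M"
  using max_affine_attained[OF assms(1,2)] assms(3) by metis

lemma max_affine_subset_le:
  assumes "finite S" "T \<subseteq> S" "T \<noteq> {}"
  shows "max_affine T u \<le> max_affine S u"
  using assms finite_subset by (intro max_affine_le) (auto intro: max_affine_ge)

lemma max_affine_translate_orthogonal:
  assumes "\<And>c e. (c, e) \<in> S \<Longrightarrow> c \<bullet> w = 0"
  shows "max_affine S (u + w) = max_affine S u"
  unfolding max_affine_def using assms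
  by (intro arg_cong[where f = Max] image_cong) (auto simp: inner_add_right)

lemma lipschitz_on_max_affine:
  assumes "finite S" "S \<noteq> {}"
  shows "\<exists>K. K-lipschitz_on UNIV (max_affine S)"
proof -
  define K where "K = Max ((\<lambda>(c, e). norm c) ` S)"
  have K: "norm c \<le> K" if "(c, e) \<in> S" for c e
    unfolding K_def using assms that by (intro Max_ge) force+
  have one_sided: "max_affine S x \<le> max_affine S w + K * dist x w" for x w
  proof -
    obtain c e where ce: "(c, e) \<in> S" "max_affine S x = c \<bullet> x + e"
      using max_affine_attained[OF assms] .
    have "c \<bullet> x + e = (c \<bullet> w + e) + c \<bullet> (x - w)" by (simp add: inner_diff_right)
    also have "\<dots> \<le> max_affine S w + norm c * norm (x - w)"
      using max_affine_ge[OF assms(1) ce(1), of w] norm_cauchy_schwarz[of c "x - w"] by linarith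
    also have "\<dots> \<le> max_affine S w + K * dist x w"
      using K[OF ce(1)] by (simp add: dist_norm mult_right_mono)
    finally show ?thesis using ce by simp
  qed
  have "0 \<le> K" using assms K by (metis all_not_in_conv norm_ge_zero order_trans surj_pair)
  then have "K-lipschitz_on UNIV (max_affine S)"
    using one_sided by (intro lipschitz_onI) (smt (verit) dist_commute dist_real_def)
  then show ?thesis ..
qed

lemma continuous_on_max_affine:
  assumes "finite S" "S \<noteq> {}"
  shows "continuous_on A (max_affine S)"
  using lipschitz_on_max_affine[OF assms] lipschitz_on_continuous_on continuous_on_subset by blast

lemma nonneg_combination_max_affine:
  fixes S :: "'i \<Rightarrow> ('a::real_inner \<times> real) set"
  assumes "finite I" "\<And>i. i \<in> I \<Longrightarrow> finite (S i)" "\<And>i. i \<in> I \<Longrightarrow> S i \<noteq> {}"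
    and "\<And>i. i \<in> I \<Longrightarrow> 0 \<le> w i"
  obtains T where "finite T" "T \<noteq> {}" "\<And>u. (\<Sum>i\<in>I. w i * max_affine (S i) u) = max_affine T u"
proof -
  define combine where
    "combine \<sigma> = ((\<Sum>i\<in>I. w i *\<^sub>R fst (\<sigma> i)), (\<Sum>i\<in>I. w i * snd (\<sigma> i)))" for \<sigma> :: "'i \<Rightarrow> 'a \<times> real"
  have combine: "fst (combine \<sigma>) \<bullet> u + snd (combine \<sigma>) = (\<Sum>i\<in>I. w i * (fst (\<sigma> i) \<bullet> u + snd (\<sigma> i)))"
    for \<sigma> u unfolding combine_def by (simp add: inner_sum_left sum.distrib algebra_simps)
  define T where "T = combine ` PiE I S"
  have "finite T" "T \<noteq> {}"
    unfolding T_def using assms(1-3) by (auto simp: finite_PiE PiE_eq_empty_iff)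
  have "(\<Sum>i\<in>I. w i * max_affine (S i) u) = max_affine T u" for u
  proof (rule antisym)
    have "\<forall>i\<in>I. \<exists>x\<in>S i. max_affine (S i) u = fst x \<bullet> u + snd x"
      using max_affine_attained[OF assms(2,3)] by (metis fst_conv snd_conv)
    then obtain \<sigma> where \<sigma>: "\<And>i. i \<in> I \<Longrightarrow> \<sigma> i \<in> S i \<and> max_affine (S i) u = fst (\<sigma> i) \<bullet> u + snd (\<sigma> i)"
      by metis
    then have "restrict \<sigma> I \<in> PiE I S" by simp
    then have "combine (restrict \<sigma> I) \<in> T" unfolding T_def by blast
    then show "(\<Sum>i\<in>I. w i * max_affine (S i) u) \<le> max_affine T u"
      using max_affine_ge[OF \<open>finite T\<close>, of "fst (combine (restrict \<sigma> I))"
          "snd (combine (restrict \<sigma> I))" u]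
      by (simp add: combine \<sigma>)
  next
    show "max_affine T u \<le> (\<Sum>i\<in>I. w i * max_affine (S i) u)"
    proof (rule max_affine_le[OF \<open>finite T\<close> \<open>T \<noteq> {}\<close>])
      fix c e assume "(c, e) \<in> T"
      then obtain \<sigma> where "\<sigma> \<in> PiE I S" "(c, e) = combine \<sigma>" unfolding T_def by blast
      moreover have "fst (combine \<sigma>) \<bullet> u + snd (combine \<sigma>) \<le> (\<Sum>i\<in>I. w i * max_affine (S i) u)"
        unfolding combine using \<open>\<sigma> \<in> PiE I S\<close> assms(2,4)
        by (intro sum_mono mult_left_mono max_affine_ge) auto
      ultimately show "c \<bullet> u + e \<le> (\<Sum>i\<in>I. w i * max_affine (S i) u)" by (metis fst_conv snd_conv)
    qed
  qed
  then show ?thesis by (rule that[OF \<open>finite T\<close> \<open>T \<noteq> {}\<close>])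
qed

section \<open>Well-posed minima\<close>

definition well_posed_minimum :: "('a::metric_space \<Rightarrow> real) \<Rightarrow> 'a \<Rightarrow> bool" where
  "well_posed_minimum f z \<longleftrightarrow> (\<forall>u. f z \<le> f u) \<and>
     (\<forall>\<epsilon>>0. \<exists>\<delta>>0. \<forall>u. f u < f z + \<delta> \<longrightarrow> (\<exists>z'. f z' = f z \<and> dist u z' < \<epsilon>))"

lemma compact_approx_minimizers_close:
  fixes f :: "'a::metric_space \<Rightarrow> real"
  assumes "compact K" "continuous_on K f" "\<And>u. u \<in> K \<Longrightarrow> m \<le> f u" "\<epsilon> > 0"
  shows "\<exists>\<delta>>0. \<forall>y\<in>K. f y < m + \<delta> \<longrightarrow> (\<exists>z\<in>K. f z = m \<and> dist y z < \<epsilon>)"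
proof -
  define T where "T = K - (\<Union>z\<in>{z\<in>K. f z = m}. ball z \<epsilon>)"
  have "compact T" unfolding T_def using assms(1) by (intro compact_diff) auto
  obtain \<delta> where "\<delta> > 0" and far: "\<And>t. t \<in> T \<Longrightarrow> m + \<delta> \<le> f t"
  proof (cases "T = {}")
    case False
    have "continuous_on T f" using assms(2) unfolding T_def by (rule continuous_on_subset) blast
    then obtain t\<^sub>0 where t\<^sub>0: "t\<^sub>0 \<in> T" "\<And>t. t \<in> T \<Longrightarrow> f t\<^sub>0 \<le> f t"
      using continuous_attains_inf[OF \<open>compact T\<close> False] by blast
    have "f t\<^sub>0 \<noteq> m" using t\<^sub>0(1) assms(4) unfolding T_def by auto
    then have "m < f t\<^sub>0" using t\<^sub>0(1) assms(3) unfolding T_def by force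
    then show ?thesis using that[of "f t\<^sub>0 - m"] t\<^sub>0(2) by auto
  qed (use that[of 1] in auto)
  have "\<exists>z\<in>K. f z = m \<and> dist y z < \<epsilon>" if "y \<in> K" "f y < m + \<delta>" for y
    using that far[of y] unfolding T_def by (force simp: dist_commute)
  then show ?thesis using \<open>\<delta> > 0\<close> by blast
qed

lemma well_posed_minimum_coercive_on_subspace:
  fixes f :: "'a::euclidean_space \<Rightarrow> real"
  assumes cont: "continuous_on UNIV f" and "subspace V"
    and invariant: "\<And>x w. (\<And>v. v \<in> V \<Longrightarrow> orthogonal w v) \<Longrightarrow> f (x + w) = f x"
    and "\<kappa> > 0" and growth: "\<And>v. v \<in> V \<Longrightarrow> \<kappa> * norm v + b \<le> f v"
  shows "\<exists>z. well_posed_minimum f z"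
proof -
  have decomp: "\<exists>y\<in>V. \<exists>w. u = y + w \<and> (\<forall>x. f (x + w) = f x)" for u
    using orthogonal_subspace_decomp_exists[of V u] invariant \<open>subspace V\<close> by (metis span_eq_iff)
  have sublevel: "v \<in> cball 0 ((M - b) / \<kappa>) \<inter> V" if "v \<in> V" "f v \<le> M" for v M
    using growth[OF that(1)] that \<open>\<kappa> > 0\<close> by (simp add: pos_le_divide_eq mult.commute)
  have compact: "compact (cball 0 R \<inter> V)" for R
    using \<open>subspace V\<close> by (intro compact_Int_closed closed_subspace) auto
  have "0 \<in> cball 0 ((f 0 - b) / \<kappa>) \<inter> V"
    using sublevel \<open>subspace V\<close> subspace_0 by blast
  then obtain z where z: "\<And>y. y \<in> cball 0 ((f 0 - b) / \<kappa>) \<inter> V \<Longrightarrow> f z \<le> f y"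
    using continuous_attains_inf[OF compact _ continuous_on_subset[OF cont]] by blast
  have minimal: "f z \<le> f u" for u
  proof -
    obtain y w where "y \<in> V" "u = y + w" "\<And>x. f (x + w) = f x" using decomp by blast
    moreover have "f z \<le> f y"
      using z[OF sublevel[OF \<open>y \<in> V\<close>]] z[OF \<open>0 \<in> _\<close>] by (cases "f y \<le> f 0") auto
    ultimately show ?thesis by metis
  qed
  have "\<exists>\<delta>>0. \<forall>u. f u < f z + \<delta> \<longrightarrow> (\<exists>z'. f z' = f z \<and> dist u z' < \<epsilon>)" if "\<epsilon> > 0" for \<epsilon>
  proof -
    define K where "K = cball 0 ((f z + 1 - b) / \<kappa>) \<inter> V"
    obtain \<delta> where "\<delta> > 0" and \<delta>: "\<And>y. y \<in> K \<Longrightarrow> f y < f z + \<delta> \<Longrightarrow> \<exists>z'. f z' = f z \<and> dist y z' < \<epsilon>"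
      using compact_approx_minimizers_close
          [OF compact continuous_on_subset[OF cont] minimal \<open>\<epsilon> > 0\<close>]
      unfolding K_def by blast
    have "\<exists>z'. f z' = f z \<and> dist u z' < \<epsilon>" if u: "f u < f z + min 1 \<delta>" for u
    proof -
      obtain y w where yw: "y \<in> V" "u = y + w" "\<And>x. f (x + w) = f x" using decomp by blast
      have "f y = f u" using yw(2) yw(3)[of y] by simp
      then have "y \<in> K" unfolding K_def using u yw(1) by (intro sublevel) auto
      then obtain z' where "f z' = f z" "dist y z' < \<epsilon>" using \<delta> u \<open>f y = f u\<close> by force
      moreover have "dist u (z' + w) = dist y z'" using yw(2) by (simp add: dist_norm algebra_simps)
      ultimately show ?thesis using yw(3) by metis
    qed
    then show ?thesis using \<open>\<delta> > 0\<close> by (intro exI[of _ "min 1 \<delta>"]) auto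
  qed
  then show ?thesis unfolding well_posed_minimum_def using minimal by blast
qed

lemma max_affine_coercive_on_span:
  fixes S :: "('a::euclidean_space \<times> real) set"
  assumes "finite S" "S \<noteq> {}"
    and no_recession: "\<And>d. \<forall>c\<in>fst ` S. c \<bullet> d \<le> 0 \<Longrightarrow> \<forall>c\<in>fst ` S. c \<bullet> d = 0"
  shows "\<exists>\<kappa>>0. \<exists>b. \<forall>v\<in>span (fst ` S). \<kappa> * norm v + b \<le> max_affine S v"
proof -
  define C where "C = fst ` S"
  define H where "H = C \<times> {0::real}"
  have H: "finite H" "H \<noteq> {}" unfolding H_def C_def using assms(1,2) by auto
  have positive: "0 < max_affine H v" if "v \<in> span C" "v \<noteq> 0" for v
  proof (rule ccontr)
    assume "\<not> 0 < max_affine H v"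
    then have "\<forall>c\<in>C. c \<bullet> v \<le> 0" using max_affine_ge[OF H(1), of _ 0 v] unfolding H_def by fastforce
    then have "\<forall>c\<in>C. c \<bullet> v = 0" using no_recession unfolding C_def by blast
    then have "\<forall>c\<in>C. orthogonal v c" by (simp add: orthogonal_def inner_commute)
    then have "orthogonal v v" using orthogonal_to_span \<open>v \<in> span C\<close> by blast
    then show False using \<open>v \<noteq> 0\<close> by (simp add: orthogonal_def)
  qed
  define K where "K = sphere 0 1 \<inter> span C"
  obtain \<kappa> where "\<kappa> > 0" and \<kappa>: "\<And>w. w \<in> K \<Longrightarrow> \<kappa> \<le> max_affine H w"
  proof (cases "K = {}")
    case False
    have "compact K" unfolding K_def by (intro compact_Int_closed) auto
    then obtain w\<^sub>0 where "w\<^sub>0 \<in> K" "\<And>w. w \<in> K \<Longrightarrow> max_affine H w\<^sub>0 \<le> max_affine H w"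
      using continuous_attains_inf[OF _ False continuous_on_max_affine[OF H]] by blast
    moreover have "0 < max_affine H w\<^sub>0" using \<open>w\<^sub>0 \<in> K\<close> positive unfolding K_def by force
    ultimately show ?thesis using that by blast
  qed (use that[of 1] in auto)
  have growth: "\<kappa> * norm v \<le> c \<bullet> v" if "v \<in> span C" "v \<noteq> 0"
    "max_affine H ((1 / norm v) *\<^sub>R v) = c \<bullet> ((1 / norm v) *\<^sub>R v)" for v c
  proof -
    have "(1 / norm v) *\<^sub>R v \<in> K" unfolding K_def using that(1,2) by (auto intro: span_mul)
    then have "\<kappa> \<le> c \<bullet> v / norm v" using \<kappa> that(3) by fastforce
    then show ?thesis using that(2) by (simp add: pos_le_divide_eq mult.commute)
  qed
  define b where "b = Min (snd ` S)"
  have "\<kappa> * norm v + b \<le> max_affine S v" if "v \<in> span C" for v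
  proof -
    obtain c e where ce: "(c, e) \<in> H"
        "max_affine H ((1 / norm v) *\<^sub>R v) = c \<bullet> ((1 / norm v) *\<^sub>R v) + e"
      using max_affine_attained[OF H] .
    then obtain e' where "(c, e') \<in> S" "e = 0" unfolding H_def C_def by auto
    moreover have "b \<le> e'" unfolding b_def using assms(1) \<open>(c, e') \<in> S\<close> by (intro Min_le) force+
    moreover have "\<kappa> * norm v \<le> c \<bullet> v"
      using growth[OF that] ce(2) \<open>e = 0\<close> by (cases "v = 0") auto
    ultimately show ?thesis using max_affine_ge[OF assms(1) \<open>(c, e') \<in> S\<close>, of v] by linarith
  qed
  then show ?thesis using \<open>\<kappa> > 0\<close> unfolding C_def by blast
qed

lemma max_affine_well_posed_minimum_no_recession:
  fixes S :: "('a::euclidean_space \<times> real) set"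
  assumes "finite S" "S \<noteq> {}"
    and "\<And>d. \<forall>c\<in>fst ` S. c \<bullet> d \<le> 0 \<Longrightarrow> \<forall>c\<in>fst ` S. c \<bullet> d = 0"
  shows "\<exists>z. well_posed_minimum (max_affine S) z"
proof -
  obtain \<kappa> b where "\<kappa> > 0" "\<And>v. v \<in> span (fst ` S) \<Longrightarrow> \<kappa> * norm v + b \<le> max_affine S v"
    using max_affine_coercive_on_span[OF assms] by blast
  moreover have "max_affine S (x + w) = max_affine S x"
    if "\<And>v. v \<in> span (fst ` S) \<Longrightarrow> orthogonal w v" for x w
    using that by (intro max_affine_translate_orthogonal)
      (metis fst_conv image_eqI orthogonal_def inner_commute span_base)
  ultimately show ?thesis
    by (intro well_posed_minimum_coercive_on_subspace[of _ "span (fst ` S)" \<kappa> b]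
        continuous_on_max_affine assms(1,2)) auto
qed

lemma max_affine_descend:
  assumes "finite S" "S \<noteq> {}" "\<forall>c\<in>fst ` S. c \<bullet> d \<le> 0"
  obtains \<kappa> where "\<kappa> > 0"
    "\<And>u M. (\<And>c e. (c, e) \<in> S \<Longrightarrow> c \<bullet> d = 0 \<Longrightarrow> c \<bullet> u + e \<le> M) \<Longrightarrow>
       \<exists>t\<ge>0. t * \<kappa> \<le> max 0 (max_affine S u - M) \<and> max_affine S (u + t *\<^sub>R d) \<le> M"
proof
  \<comment> \<open>a lower bound for the rate at which moving along \<open>d\<close> lowers the pieces that are not
    constant along \<open>d\<close>\<close>
  define \<kappa> where "\<kappa> = Min (insert 1 ((\<lambda>c. - (c \<bullet> d)) ` {c \<in> fst ` S. c \<bullet> d < 0}))"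
  show "\<kappa> > 0" unfolding \<kappa>_def using assms(1) by (subst Min_gr_iff) auto
  have steep: "c \<bullet> d \<le> - \<kappa>" if "(c, e) \<in> S" "c \<bullet> d \<noteq> 0" for c e
  proof -
    have "c \<in> {c \<in> fst ` S. c \<bullet> d < 0}" using that assms(3) by force
    then have "\<kappa> \<le> - (c \<bullet> d)" unfolding \<kappa>_def using assms(1) by (intro Min_le) auto
    then show ?thesis by simp
  qed
  fix u M assume flat: "\<And>c e. (c, e) \<in> S \<Longrightarrow> c \<bullet> d = 0 \<Longrightarrow> c \<bullet> u + e \<le> M"
  define t where "t = max 0 (max_affine S u - M) / \<kappa>"
  have "t \<ge> 0" and t: "t * \<kappa> = max 0 (max_affine S u - M)"
    using \<open>\<kappa> > 0\<close> unfolding t_def by auto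
  have "c \<bullet> (u + t *\<^sub>R d) + e \<le> M" if "(c, e) \<in> S" for c e
  proof (cases "c \<bullet> d = 0")
    case False
    have "c \<bullet> (u + t *\<^sub>R d) + e = (c \<bullet> u + e) + t * (c \<bullet> d)" by (simp add: inner_add_right)
    also have "\<dots> \<le> max_affine S u - t * \<kappa>"
      using max_affine_ge[OF assms(1) that, of u] steep[OF that False] mult_left_mono[OF _ \<open>t \<ge> 0\<close>]
      by (smt (verit) mult_minus_right)
    also have "\<dots> \<le> M" using t by simp
    finally show ?thesis .
  qed (use flat[OF that] in \<open>simp add: inner_add_right\<close>)
  then show "\<exists>t\<ge>0. t * \<kappa> \<le> max 0 (max_affine S u - M) \<and> max_affine S (u + t *\<^sub>R d) \<le> M"
    using \<open>t \<ge> 0\<close> t by (intro exI[of _ t]) (auto intro: max_affine_le[OF assms(1,2)])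
qed

lemma well_posed_minimum_transfer:
  fixes f g :: "'a::metric_space \<Rightarrow> real"
  assumes below: "\<And>u. g u \<le> f u" and "well_posed_minimum g z\<^sub>0"
    and lipschitz: "K-lipschitz_on UNIV f" and "0 \<le> C"
    and push: "\<And>u. g u = g z\<^sub>0 \<Longrightarrow> \<exists>z'. f z' = g z\<^sub>0 \<and> dist u z' \<le> C * max 0 (f u - g z\<^sub>0)"
  shows "\<exists>z. well_posed_minimum f z"
proof -
  define m where "m = g z\<^sub>0"
  have minimal: "m \<le> f u" for u
    using assms(2) below[of u] unfolding well_posed_minimum_def m_def by (meson order_trans)
  obtain z where "f z = m" using push[of z\<^sub>0] unfolding m_def by blast
  have "\<exists>\<delta>>0. \<forall>u. f u < m + \<delta> \<longrightarrow> (\<exists>z'. f z' = m \<and> dist u z' < \<epsilon>)" if "\<epsilon> > 0" for \<epsilon>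
  proof -
    have "0 \<le> K" using lipschitz by (rule lipschitz_on_nonneg)
    define q where "q = 1 + C * (1 + K)"
    have "q \<ge> 1" unfolding q_def using \<open>0 \<le> C\<close> \<open>0 \<le> K\<close> by simp
    define \<eta> where "\<eta> = \<epsilon> / (2 * q)"
    have "\<eta> > 0" "\<eta> * q = \<epsilon> / 2" unfolding \<eta>_def using \<open>\<epsilon> > 0\<close> \<open>q \<ge> 1\<close> by auto
    obtain \<delta>\<^sub>0 where "\<delta>\<^sub>0 > 0" and \<delta>\<^sub>0: "\<And>u. g u < m + \<delta>\<^sub>0 \<Longrightarrow> \<exists>z'. g z' = m \<and> dist u z' < \<eta>"
      using assms(2) \<open>\<eta> > 0\<close> unfolding well_posed_minimum_def m_def by blast
    have "\<exists>z'. f z' = m \<and> dist u z' < \<epsilon>" if u: "f u < m + min \<delta>\<^sub>0 \<eta>" for u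
    proof -
      obtain z\<^sub>1 where z\<^sub>1: "g z\<^sub>1 = m" "dist u z\<^sub>1 < \<eta>" using \<delta>\<^sub>0[of u] below[of u] u by force
      obtain z' where z': "f z' = m" "dist z\<^sub>1 z' \<le> C * max 0 (f z\<^sub>1 - m)"
        using push z\<^sub>1(1) unfolding m_def by blast
      have "f z\<^sub>1 - f u \<le> K * dist z\<^sub>1 u"
        using lipschitz_onD[OF lipschitz, of z\<^sub>1 u] by (simp add: dist_real_def abs_le_iff)
      also have "\<dots> \<le> K * \<eta>" using z\<^sub>1(2) \<open>0 \<le> K\<close> by (simp add: dist_commute mult_left_mono)
      finally have "max 0 (f z\<^sub>1 - m) \<le> \<eta> * (1 + K)"
        using u \<open>\<eta> > 0\<close> \<open>0 \<le> K\<close> by (simp add: algebra_simps)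
      then have "dist z\<^sub>1 z' \<le> C * (\<eta> * (1 + K))"
        using z'(2) mult_left_mono[OF _ \<open>0 \<le> C\<close>] by (meson order_trans)
      then have "dist u z' < \<eta> + C * (\<eta> * (1 + K))"
        using dist_triangle[of u z' z\<^sub>1] z\<^sub>1(2) by linarith
      also have "\<dots> = \<eta> * q" unfolding q_def by (simp add: algebra_simps)
      finally show ?thesis using z'(1) \<open>\<eta> * q = \<epsilon> / 2\<close> \<open>\<epsilon> > 0\<close> by auto
    qed
    then show ?thesis using \<open>\<delta>\<^sub>0 > 0\<close> \<open>\<eta> > 0\<close> by (intro exI[of _ "min \<delta>\<^sub>0 \<eta>"]) auto
  qed
  then have "well_posed_minimum f z"
    unfolding well_posed_minimum_def using \<open>f z = m\<close> minimal by simp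
  then show ?thesis ..
qed

lemma max_affine_well_posed_minimum_recession:
  fixes S :: "('a::euclidean_space \<times> real) set" and d :: 'a
  defines "S\<^sub>0 \<equiv> {x \<in> S. fst x \<bullet> d = 0}"
  assumes "finite S" "S \<noteq> {}" and bounded: "\<And>u. B \<le> max_affine S u"
    and "\<forall>c\<in>fst ` S. c \<bullet> d \<le> 0"
    and flat_part: "S\<^sub>0 \<noteq> {} \<Longrightarrow> (\<And>u. B \<le> max_affine S\<^sub>0 u) \<Longrightarrow>
      \<exists>z\<^sub>0. well_posed_minimum (max_affine S\<^sub>0) z\<^sub>0"
  shows "\<exists>z. well_posed_minimum (max_affine S) z"
proof -
  obtain \<kappa> where "\<kappa> > 0" and descend: "\<And>u M. (\<And>c e. (c, e) \<in> S \<Longrightarrow> c \<bullet> d = 0 \<Longrightarrow> c \<bullet> u + e \<le> M) \<Longrightarrow>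
      \<exists>t\<ge>0. t * \<kappa> \<le> max 0 (max_affine S u - M) \<and> max_affine S (u + t *\<^sub>R d) \<le> M"
    using max_affine_descend[OF assms(2-3,5)] by blast
  have "finite S\<^sub>0" "S\<^sub>0 \<subseteq> S" unfolding S\<^sub>0_def using assms(2) by auto
  have "S\<^sub>0 \<noteq> {}"
  proof
    assume "S\<^sub>0 = {}"
    have "\<exists>t\<ge>0. t * \<kappa> \<le> max 0 (max_affine S 0 - (B - 1)) \<and> max_affine S (0 + t *\<^sub>R d) \<le> B - 1"
      by (rule descend) (use \<open>S\<^sub>0 = {}\<close> in \<open>auto simp: S\<^sub>0_def\<close>)
    then obtain t where "max_affine S (0 + t *\<^sub>R d) \<le> B - 1" by blast
    then show False using bounded[of "0 + t *\<^sub>R d"] by simp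
  qed
  have flat: "c \<bullet> u + e \<le> max_affine S\<^sub>0 u" if "(c, e) \<in> S" "c \<bullet> d = 0" for c e u
    using that max_affine_ge[OF \<open>finite S\<^sub>0\<close>] unfolding S\<^sub>0_def by simp
  have step: "\<exists>t\<ge>0. t * \<kappa> \<le> max 0 (max_affine S u - max_affine S\<^sub>0 u) \<and>
      max_affine S (u + t *\<^sub>R d) \<le> max_affine S\<^sub>0 u" for u
    by (rule descend) (simp add: flat)
  have "B \<le> max_affine S\<^sub>0 u" for u
  proof -
    obtain t where "max_affine S (u + t *\<^sub>R d) \<le> max_affine S\<^sub>0 u" using step[of u] by blast
    then show ?thesis using bounded[of "u + t *\<^sub>R d"] by linarith
  qed
  then obtain z\<^sub>0 where z\<^sub>0: "well_posed_minimum (max_affine S\<^sub>0) z\<^sub>0"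
    using flat_part \<open>S\<^sub>0 \<noteq> {}\<close> by blast
  then have minimal\<^sub>0: "max_affine S\<^sub>0 z\<^sub>0 \<le> max_affine S\<^sub>0 u" for u
    unfolding well_posed_minimum_def by blast
  have below: "max_affine S\<^sub>0 u \<le> max_affine S u" for u
    by (rule max_affine_subset_le[OF assms(2) \<open>S\<^sub>0 \<subseteq> S\<close> \<open>S\<^sub>0 \<noteq> {}\<close>])
  have push: "\<exists>z'. max_affine S z' = max_affine S\<^sub>0 z\<^sub>0 \<and>
      dist u z' \<le> norm d / \<kappa> * max 0 (max_affine S u - max_affine S\<^sub>0 z\<^sub>0)"
    if minimizer: "max_affine S\<^sub>0 u = max_affine S\<^sub>0 z\<^sub>0" for u
  proof -
    obtain t where "t \<ge> 0" and t: "t * \<kappa> \<le> max 0 (max_affine S u - max_affine S\<^sub>0 z\<^sub>0)"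
      and "max_affine S (u + t *\<^sub>R d) \<le> max_affine S\<^sub>0 z\<^sub>0"
      using step[of u] unfolding minimizer by blast
    moreover have "max_affine S\<^sub>0 z\<^sub>0 \<le> max_affine S (u + t *\<^sub>R d)"
      using minimal\<^sub>0[of "u + t *\<^sub>R d"] below[of "u + t *\<^sub>R d"] by linarith
    moreover have "t \<le> max 0 (max_affine S u - max_affine S\<^sub>0 z\<^sub>0) / \<kappa>"
      using t \<open>\<kappa> > 0\<close> by (simp add: pos_le_divide_eq)
    then have "t * norm d \<le> max 0 (max_affine S u - max_affine S\<^sub>0 z\<^sub>0) / \<kappa> * norm d"
      by (rule mult_right_mono) simp
    then have "dist u (u + t *\<^sub>R d) \<le> norm d / \<kappa> * max 0 (max_affine S u - max_affine S\<^sub>0 z\<^sub>0)"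
      using \<open>t \<ge> 0\<close> by (simp add: dist_norm mult.commute)
    ultimately show ?thesis by (intro exI[of _ "u + t *\<^sub>R d"]) (simp add: order_antisym)
  qed
  obtain K where "K-lipschitz_on UNIV (max_affine S)"
    using lipschitz_on_max_affine[OF assms(2,3)] by blast
  moreover have "0 \<le> norm d / \<kappa>" using \<open>\<kappa> > 0\<close> by simp
  ultimately show ?thesis by (rule well_posed_minimum_transfer[OF below z\<^sub>0 _ _ push])
qed

theorem max_affine_well_posed_minimum:
  fixes S :: "('a::euclidean_space \<times> real) set"
  assumes "finite S" "S \<noteq> {}" "\<And>u. B \<le> max_affine S u"
  shows "\<exists>z. well_posed_minimum (max_affine S) z"
  using assms
proof (induction "card S" arbitrary: S rule: less_induct)
  case less
  show ?case
  proof (cases "\<exists>d. (\<forall>c\<in>fst ` S. c \<bullet> d \<le> 0) \<and> (\<exists>c\<in>fst ` S. c \<bullet> d < 0)")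
    case True
    then obtain d c\<^sub>1 where d: "\<forall>c\<in>fst ` S. c \<bullet> d \<le> 0" and "c\<^sub>1 \<in> fst ` S" "c\<^sub>1 \<bullet> d < 0"
      by blast
    then have "{x \<in> S. fst x \<bullet> d = 0} \<subset> S" by force
    then have "card {x \<in> S. fst x \<bullet> d = 0} < card S"
      using less.prems(1) by (rule psubset_card_mono[rotated])
    then show ?thesis
      using less.hyps less.prems(1)
      by (intro max_affine_well_posed_minimum_recession[OF less.prems d]) auto
  next
    case False
    then have "\<forall>c\<in>fst ` S. c \<bullet> d = 0" if "\<forall>c\<in>fst ` S. c \<bullet> d \<le> 0" for d
      using that by (auto simp: order_le_less)
    then show ?thesis by (rule max_affine_well_posed_minimum_no_recession[OF less.prems(1,2)])
  qed
qed

section \<open>Norms on Euclidean space\<close>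

lemma convex_on_is_norm:
  fixes N :: "'a::real_vector \<Rightarrow> real"
  assumes "is_norm N"
  shows "convex_on UNIV N"
proof (rule convex_onI)
  fix t :: real and x y :: 'a assume "0 < t" "t < 1"
  have "N ((1 - t) *\<^sub>R x + t *\<^sub>R y) \<le> N ((1 - t) *\<^sub>R x) + N (t *\<^sub>R y)"
    using assms unfolding is_norm_def by blast
  also have "\<dots> = (1 - t) * N x + t * N y"
    using assms \<open>0 < t\<close> \<open>t < 1\<close> unfolding is_norm_def by simp
  finally show "N ((1 - t) *\<^sub>R x + t *\<^sub>R y) \<le> (1 - t) * N x + t * N y" .
qed simp

lemma is_norm_comparable:
  fixes N :: "'a::euclidean_space \<Rightarrow> real"
  assumes "is_norm N"
  shows "\<exists>c>0. \<exists>C>0. \<forall>x. c * norm x \<le> N x \<and> N x \<le> C * norm x"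
proof -
  have hom: "N (a *\<^sub>R x) = \<bar>a\<bar> * N x" and pos: "x \<noteq> 0 \<Longrightarrow> 0 < N x" and "N 0 = 0" for a x
    using assms unfolding is_norm_def by (metis order_le_less)+
  have cont: "continuous_on (sphere 0 1) N"
    using convex_on_continuous[OF open_UNIV convex_on_is_norm[OF assms]] continuous_on_subset
    by blast
  obtain b :: 'a where "b \<in> sphere 0 1" using nonempty_Basis norm_Basis by fastforce
  then obtain x\<^sub>0 x\<^sub>1 where x\<^sub>0: "x\<^sub>0 \<in> sphere 0 1" "\<And>y. y \<in> sphere 0 1 \<Longrightarrow> N x\<^sub>0 \<le> N y"
    and x\<^sub>1: "x\<^sub>1 \<in> sphere 0 1" "\<And>y. y \<in> sphere 0 1 \<Longrightarrow> N y \<le> N x\<^sub>1"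
    using continuous_attains_inf[OF compact_sphere _ cont]
      continuous_attains_sup[OF compact_sphere _ cont]
    by blast
  have scale: "N x = norm x * N ((1 / norm x) *\<^sub>R x)" for x
    by (cases "x = 0") (simp_all add: hom \<open>N 0 = 0\<close>)
  have unit: "(1 / norm x) *\<^sub>R x \<in> sphere 0 1" if "x \<noteq> 0" for x
    using that by simp
  have "N x\<^sub>0 * norm x \<le> N x \<and> N x \<le> N x\<^sub>1 * norm x" for x
  proof (cases "x = 0")
    case False
    then show ?thesis
      using x\<^sub>0(2)[OF unit[OF False]] x\<^sub>1(2)[OF unit[OF False]] scale[of x]
      by (intro conjI; metis mult.commute mult_left_mono norm_ge_zero)
  qed (simp add: \<open>N 0 = 0\<close>)
  moreover have "0 < N x\<^sub>0" "0 < N x\<^sub>1" using x\<^sub>0(1) x\<^sub>1(1) by (auto intro!: pos)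
  ultimately show ?thesis by blast
qed

section \<open>Losses that are maxima of affine functions\<close>

locale max_affine_loss =
  fixes L :: "'a::euclidean_space \<Rightarrow> 'y::finite \<Rightarrow> real" and pieces :: "'y \<Rightarrow> ('a \<times> real) set"
  assumes finite_pieces: "finite (pieces y)" and pieces_nonempty: "pieces y \<noteq> {}"
    and loss_eq: "L u y = max_affine (pieces y) u"

lemma polyhedral_loss_max_affine_loss:
  assumes "polyhedral_loss L"
  shows "\<exists>pieces. max_affine_loss L pieces"
  using assms unfolding polyhedral_loss_def max_affine_loss_def max_affine_def by metis

context max_affine_loss
begin

lemma expected_max_affine:
  assumes "\<And>y. 0 \<le> p y"
  obtains T where "finite T" "T \<noteq> {}" "\<And>u. expected p (L u) = max_affine T u"
proof (rule nonneg_combination_max_affine[of UNIV pieces p])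
  fix T assume "finite T" "T \<noteq> {}" "\<And>u. (\<Sum>y\<in>UNIV. p y * max_affine (pieces y) u) = max_affine T u"
  then show thesis by (intro that) (auto simp: expected_def loss_eq)
qed (auto simp: finite_pieces pieces_nonempty assms)

definition selection_region :: "('y \<Rightarrow> 'a \<times> real) \<Rightarrow> 'a set" where
  "selection_region \<sigma> =
     {u. \<forall>y a b. (a, b) \<in> pieces y \<longrightarrow> a \<bullet> u + b \<le> fst (\<sigma> y) \<bullet> u + snd (\<sigma> y)}"

lemma polyhedron_selection_region: "polyhedron (selection_region \<sigma>)"
proof -
  have halfspace: "{u. a \<bullet> u + b \<le> c \<bullet> u + e} = {u. (a - c) \<bullet> u \<le> e - b}" for a c :: 'a and b e
    by (auto simp: inner_diff_left)
  have "selection_region \<sigma> =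
      (\<Inter>(y, a, b)\<in>Sigma UNIV pieces. {u. a \<bullet> u + b \<le> fst (\<sigma> y) \<bullet> u + snd (\<sigma> y)})"
    unfolding selection_region_def by auto
  then show ?thesis
    by (auto intro!: polyhedron_Inter simp: halfspace polyhedron_halfspace_le finite_pieces)
qed

lemma loss_on_selection_region:
  assumes "\<sigma> \<in> PiE UNIV pieces" "u \<in> selection_region \<sigma>"
  shows "L u y = fst (\<sigma> y) \<bullet> u + snd (\<sigma> y)"
proof (rule antisym)
  show "L u y \<le> fst (\<sigma> y) \<bullet> u + snd (\<sigma> y)"
    using assms(2) unfolding loss_eq selection_region_def
    by (intro max_affine_le finite_pieces pieces_nonempty) auto
  show "fst (\<sigma> y) \<bullet> u + snd (\<sigma> y) \<le> L u y"
    using assms(1) unfolding loss_eq by (intro max_affine_ge finite_pieces) auto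
qed

lemma selection_regions_cover: "\<exists>\<sigma>\<in>PiE UNIV pieces. u \<in> selection_region \<sigma>"
proof -
  have "\<forall>y. \<exists>x\<in>pieces y. max_affine (pieces y) u = fst x \<bullet> u + snd x"
    using max_affine_attained[OF finite_pieces pieces_nonempty] by (metis fst_conv snd_conv)
  then obtain \<sigma> where \<sigma>: "\<And>y. \<sigma> y \<in> pieces y \<and> max_affine (pieces y) u = fst (\<sigma> y) \<bullet> u + snd (\<sigma> y)"
    by metis
  have "a \<bullet> u + b \<le> fst (\<sigma> y) \<bullet> u + snd (\<sigma> y)" if "(a, b) \<in> pieces y" for y a b
    using max_affine_ge[OF finite_pieces that, of u] \<sigma>[of y] by simp
  then have "u \<in> selection_region \<sigma>" unfolding selection_region_def by blast
  then show ?thesis using \<sigma> by auto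
qed

lemma prop_of_Int_selection_region_face_of:
  assumes "\<sigma> \<in> PiE UNIV pieces"
  shows "prop_of L p \<inter> selection_region \<sigma> face_of selection_region \<sigma>"
proof (cases "prop_of L p = {}")
  case False
  then obtain z where z: "\<And>u. expected p (L z) \<le> expected p (L u)" unfolding prop_of_def by blast
  define c where "c = (\<Sum>y\<in>UNIV. p y *\<^sub>R fst (\<sigma> y))"
  define d where "d = (\<Sum>y\<in>UNIV. p y * snd (\<sigma> y))"
  have affine: "expected p (L u) = c \<bullet> u + d" if "u \<in> selection_region \<sigma>" for u
    unfolding expected_def c_def d_def loss_on_selection_region[OF assms that]
    by (simp add: inner_sum_left sum.distrib algebra_simps)
  have supporting: "(- c) \<bullet> u \<le> d - expected p (L z)" if "u \<in> selection_region \<sigma>" for u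
    using z[of u] affine[OF that] by simp
  have "u \<in> prop_of L p \<longleftrightarrow> expected p (L u) = expected p (L z)" for u
    using z unfolding prop_of_def by (auto intro: order_antisym)
  then have "prop_of L p \<inter> selection_region \<sigma> =
      selection_region \<sigma> \<inter> {u. (- c) \<bullet> u = d - expected p (L z)}"
    using affine by auto
  moreover have
    "selection_region \<sigma> \<inter> {u. (- c) \<bullet> u = d - expected p (L z)} face_of selection_region \<sigma>"
    using supporting
    by (intro face_of_Int_supporting_hyperplane_le polyhedron_imp_convex
        polyhedron_selection_region)
  ultimately show ?thesis by simp
qed simp

lemma finite_cells: "finite (cells L)"
proof -
  define faces where "faces = PiE (PiE UNIV pieces) (\<lambda>\<sigma>. {F. F face_of selection_region \<sigma>})"
  have "finite faces"
    unfolding faces_def using finite_pieces polyhedron_selection_region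
    by (intro finite_PiE finite_polyhedron_faces) auto
  moreover have "cells L \<subseteq> (\<lambda>F. \<Union>\<sigma>\<in>PiE UNIV pieces. F \<sigma>) ` faces"
  proof
    fix U assume "U \<in> cells L"
    then obtain p where "U = prop_of L p" unfolding cells_def by blast
    define F where "F = restrict (\<lambda>\<sigma>. prop_of L p \<inter> selection_region \<sigma>) (PiE UNIV pieces)"
    have "F \<in> faces" unfolding F_def faces_def using prop_of_Int_selection_region_face_of by auto
    moreover have "U = (\<Union>\<sigma>\<in>PiE UNIV pieces. F \<sigma>)"
      unfolding F_def \<open>U = prop_of L p\<close> using selection_regions_cover by auto
    ultimately show "U \<in> (\<lambda>F. \<Union>\<sigma>\<in>PiE UNIV pieces. F \<sigma>) ` faces" by blast
  qed
  ultimately show ?thesis by (rule finite_surj)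
qed

end

section \<open>Calibration and the thickened link\<close>

lemma mem_thick_Psi_iff:
  "r \<in> thick_Psi L \<gamma> \<epsilon> N u \<longleftrightarrow>
     (\<forall>p\<in>prob_simplex. (\<exists>us\<in>prop_of L p. N (us - u) < \<epsilon>) \<longrightarrow> r \<in> \<gamma> p)"
  unfolding thick_Psi_def cells_def cell_reports_def cell_region_def level_set_def
  by (auto simp: INF_less_iff)

lemma ereal_INF_gap_iff:
  fixes f :: "'a \<Rightarrow> real"
  assumes "\<And>u. f z \<le> f u"
  shows "(INF u. ereal (f u)) < (INF u\<in>A. ereal (f u)) \<longleftrightarrow> (\<exists>\<delta>>0. \<forall>u\<in>A. f z + \<delta> \<le> f u)"
proof -
  have "(INF u. ereal (f u)) = ereal (f z)"
    using assms by (intro antisym INF_lower INF_greatest) auto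
  moreover have "ereal (f z) < (INF u\<in>A. ereal (f u)) \<longleftrightarrow>
      (\<exists>\<delta>>0. ereal (f z + \<delta>) \<le> (INF u\<in>A. ereal (f u)))"
  proof
    assume "ereal (f z) < (INF u\<in>A. ereal (f u))"
    then show "\<exists>\<delta>>0. ereal (f z + \<delta>) \<le> (INF u\<in>A. ereal (f u))"
      by (cases "INF u\<in>A. ereal (f u)") (auto intro: exI[of _ "_ - f z"] exI[of _ 1])
  qed (auto intro: less_le_trans[of _ "ereal (f z + _)"])
  ultimately show ?thesis by (simp add: le_INF_iff)
qed

lemma calibrated_imp_indirectly_elicits:
  assumes "calibrated L \<psi> l"
  shows "indirectly_elicits L (prop_of l)"
  unfolding indirectly_elicits_def
proof
  fix u
  have "\<psi> u \<in> prop_of l p" if "p \<in> prob_simplex" "u \<in> prop_of L p" for p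
  proof -
    have "\<And>v. expected p (L u) \<le> expected p (L v)" using that(2) unfolding prop_of_def by blast
    moreover have "(INF v. ereal (expected p (L v))) <
        (INF v\<in>{v. \<psi> v \<notin> prop_of l p}. ereal (expected p (L v)))"
      using assms that(1) unfolding calibrated_def by blast
    ultimately obtain \<delta> where "\<delta> > 0"
        "\<forall>v\<in>{v. \<psi> v \<notin> prop_of l p}. expected p (L u) + \<delta> \<le> expected p (L v)"
      using ereal_INF_gap_iff[where f = "\<lambda>v. expected p (L v)" and z = u] by blast
    then show ?thesis by force
  qed
  then show "\<exists>r. level_set (prop_of L) u \<subseteq> level_set (prop_of l) r"
    unfolding level_set_def by blast
qed

lemma finite_image_uniform_bound:
  fixes P :: "'b \<Rightarrow> real \<Rightarrow> bool"
  assumes "finite (g ` A)" "\<And>x. x \<in> A \<Longrightarrow> \<exists>\<eta>>0. P (g x) \<eta>"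
    and mono: "\<And>k \<eta> \<eta>'. P k \<eta> \<Longrightarrow> \<eta>' \<le> \<eta> \<Longrightarrow> P k \<eta>'"
  shows "\<exists>\<epsilon>>0. \<forall>x\<in>A. P (g x) \<epsilon>"
proof -
  have "\<forall>k\<in>g ` A. \<exists>\<eta>>0. P k \<eta>" using assms(2) by blast
  then obtain \<eta> where \<eta>: "\<And>k. k \<in> g ` A \<Longrightarrow> \<eta> k > 0 \<and> P k (\<eta> k)" by metis
  define \<epsilon> where "\<epsilon> = Min (insert 1 (\<eta> ` g ` A))"
  have "\<epsilon> > 0" unfolding \<epsilon>_def using assms(1) \<eta> by (subst Min_gr_iff) auto
  moreover have "\<epsilon> \<le> \<eta> (g x)" if "x \<in> A" for x
    unfolding \<epsilon>_def using assms(1) that by (intro Min_le) auto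
  ultimately show ?thesis using \<eta> mono by blast
qed

context max_affine_loss
begin

lemma expected_loss_norm_lipschitz:
  assumes "is_norm N" "\<And>y. 0 \<le> p y"
  obtains K where "K > 0" "\<And>u w. expected p (L u) \<le> expected p (L w) + K * N (w - u)"
proof -
  obtain T where T: "finite T" "T \<noteq> {}" "\<And>u. expected p (L u) = max_affine T u"
    using expected_max_affine[of p, OF assms(2)] by blast
  obtain K where K: "K-lipschitz_on UNIV (max_affine T)" using lipschitz_on_max_affine[OF T(1,2)] ..
  obtain c where "c > 0" and c: "\<And>x. c * norm x \<le> N x"
    using is_norm_comparable[OF assms(1)] by blast
  have "0 \<le> K" using K by (rule lipschitz_on_nonneg)
  have bound: "expected p (L u) \<le> expected p (L w) + (K + 1) / c * N (w - u)" for u w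
  proof -
    have "max_affine T u - max_affine T w \<le> K * dist w u"
      using lipschitz_onD[OF K, of u w] by (simp add: dist_real_def dist_commute abs_le_iff)
    also have "\<dots> \<le> (K + 1) * (N (w - u) / c)"
    proof (rule mult_mono)
      show "dist w u \<le> N (w - u) / c"
        using c[of "w - u"] \<open>c > 0\<close> by (simp add: dist_norm pos_le_divide_eq mult.commute)
    qed (use \<open>0 \<le> K\<close> in auto)
    finally show ?thesis using T(3) by simp
  qed
  have "(K + 1) / c > 0" using \<open>0 \<le> K\<close> \<open>c > 0\<close> by simp
  then show ?thesis using bound by (rule that)
qed

lemma expected_loss_well_posed_minimum:
  assumes "nonneg_loss L" "p \<in> prob_simplex"
  shows "\<exists>z. well_posed_minimum (\<lambda>u. expected p (L u)) z"
proof -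
  have "\<And>y. 0 \<le> p y" using assms(2) unfolding prob_simplex_def by simp
  then obtain T where T: "finite T" "T \<noteq> {}" "\<And>u. expected p (L u) = max_affine T u"
    using expected_max_affine[of p] by blast
  have "0 \<le> max_affine T u" for u
    unfolding T(3)[symmetric] expected_def using assms \<open>\<And>y. 0 \<le> p y\<close>
    by (intro sum_nonneg mult_nonneg_nonneg) (auto simp: nonneg_loss_def)
  moreover have "(\<lambda>u. expected p (L u)) = max_affine T" using T(3) by (intro ext)
  ultimately show ?thesis using max_affine_well_posed_minimum[OF T(1,2), of 0] by simp
qed

lemma calibrated_link_near_minimizers:
  assumes "is_norm N" "calibrated L \<psi> l" "p \<in> prob_simplex"
  shows "\<exists>\<eta>>0. \<forall>u. (\<exists>us\<in>prop_of L p. N (us - u) < \<eta>) \<longrightarrow> \<psi> u \<in> prop_of l p"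
proof (cases "prop_of L p = {}")
  case False
  then obtain z where z: "\<And>u. expected p (L z) \<le> expected p (L u)" unfolding prop_of_def by blast
  have "(INF u. ereal (expected p (L u))) <
      (INF u\<in>{u. \<psi> u \<notin> prop_of l p}. ereal (expected p (L u)))"
    using assms(2,3) unfolding calibrated_def by blast
  then obtain \<delta> where "\<delta> > 0"
    and gap: "\<forall>u\<in>{u. \<psi> u \<notin> prop_of l p}. expected p (L z) + \<delta> \<le> expected p (L u)"
    unfolding ereal_INF_gap_iff[where f = "\<lambda>u. expected p (L u)", OF z] by blast
  obtain K where "K > 0" and K: "\<And>u w. expected p (L u) \<le> expected p (L w) + K * N (w - u)"
    using expected_loss_norm_lipschitz[of N p, OF assms(1)] assms(3)
    unfolding prob_simplex_def by blast
  have "\<psi> u \<in> prop_of l p" if "us \<in> prop_of L p" "N (us - u) < \<delta> / K" for u us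
  proof (rule ccontr)
    assume "\<psi> u \<notin> prop_of l p"
    have "expected p (L us) \<le> expected p (L z)" using that(1) unfolding prop_of_def by blast
    moreover have "K * N (us - u) < \<delta>" using that(2) \<open>K > 0\<close> by (simp add: field_simps)
    ultimately show False using gap \<open>\<psi> u \<notin> prop_of l p\<close> K[of u us] by force
  qed
  then show ?thesis using \<open>\<delta> > 0\<close> \<open>K > 0\<close> by (intro exI[of _ "\<delta> / K"]) auto
qed (auto intro!: exI[of _ 1])

lemma calibrated_imp_thickened_link:
  fixes l :: "'r::finite \<Rightarrow> 'y \<Rightarrow> real" and \<psi> :: "'a \<Rightarrow> 'r"
  assumes "is_norm N" "calibrated L \<psi> l"
  shows "\<exists>\<epsilon>>0. produced_by_thickened_link L (prop_of l) \<epsilon> N \<psi>"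
proof -
  \<comment> \<open>depends on \<open>p\<close> only through the pair of level sets, which takes finitely many values\<close>
  define separated where
    "separated k \<eta> \<longleftrightarrow> (\<forall>u. (\<exists>us\<in>fst k. N (us - u) < \<eta>) \<longrightarrow> \<psi> u \<in> snd k)" for k \<eta>
  have "\<exists>\<epsilon>>0. \<forall>p\<in>prob_simplex. separated (prop_of L p, prop_of l p) \<epsilon>"
  proof (rule finite_image_uniform_bound[where P = separated])
    show "finite ((\<lambda>p. (prop_of L p, prop_of l p)) ` prob_simplex)"
    proof (rule finite_subset[OF _ finite_cartesian_product[OF finite_cells finite]])
      show "(\<lambda>p. (prop_of L p, prop_of l p)) ` prob_simplex \<subseteq> cells L \<times> UNIV"
        unfolding cells_def by blast
    qed
    show "\<exists>\<eta>>0. separated (prop_of L p, prop_of l p) \<eta>" if "p \<in> prob_simplex" for p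
      using calibrated_link_near_minimizers[OF assms that] unfolding separated_def by simp
    show "separated k \<eta>'" if "separated k \<eta>" "\<eta>' \<le> \<eta>" for k \<eta> \<eta>'
      using that unfolding separated_def by (meson order_less_le_trans)
  qed
  then obtain \<epsilon> where "\<epsilon> > 0" and "\<forall>p\<in>prob_simplex. separated (prop_of L p, prop_of l p) \<epsilon>"
    by blast
  then have "\<psi> u \<in> thick_Psi L (prop_of l) \<epsilon> N u" for u
    unfolding mem_thick_Psi_iff separated_def fst_conv snd_conv by blast
  then show ?thesis
    using \<open>\<epsilon> > 0\<close> assms(1) calibrated_imp_indirectly_elicits[OF assms(2)]
    unfolding produced_by_thickened_link_def by (intro exI[of _ \<epsilon>]) auto
qed

lemma thickened_link_imp_calibrated:
  fixes l :: "'r \<Rightarrow> 'y \<Rightarrow> real"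
  assumes "nonneg_loss L" "produced_by_thickened_link L (prop_of l) \<epsilon> N \<psi>"
  shows "calibrated L \<psi> l"
  unfolding calibrated_def
proof
  fix p :: "'y \<Rightarrow> real" assume p: "p \<in> prob_simplex"
  have "\<epsilon> > 0" "is_norm N" and link: "\<And>u. \<psi> u \<in> thick_Psi L (prop_of l) \<epsilon> N u"
    using assms(2) unfolding produced_by_thickened_link_def by blast+
  obtain C where "C > 0" and C: "\<And>x. N x \<le> C * norm x"
    using is_norm_comparable[OF \<open>is_norm N\<close>] by blast
  obtain z where z: "well_posed_minimum (\<lambda>u. expected p (L u)) z"
    using expected_loss_well_posed_minimum[OF assms(1) p] by blast
  then have min: "\<And>u. expected p (L z) \<le> expected p (L u)" unfolding well_posed_minimum_def by blast
  have "\<epsilon> / C > 0" using \<open>\<epsilon> > 0\<close> \<open>C > 0\<close> by simp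
  then obtain \<delta> where "\<delta> > 0" and near: "\<forall>u. expected p (L u) < expected p (L z) + \<delta> \<longrightarrow>
      (\<exists>z'. expected p (L z') = expected p (L z) \<and> dist u z' < \<epsilon> / C)"
    using z unfolding well_posed_minimum_def by blast
  have "expected p (L z) + \<delta> \<le> expected p (L u)" if "\<psi> u \<notin> prop_of l p" for u
  proof (rule ccontr)
    assume "\<not> ?thesis"
    then obtain z' where z': "expected p (L z') = expected p (L z)" "dist u z' < \<epsilon> / C"
      using near by force
    have "z' \<in> prop_of L p" using min z'(1) unfolding prop_of_def by simp
    moreover have "N (z' - u) < \<epsilon>"
      using C[of "z' - u"] z'(2) \<open>C > 0\<close> by (simp add: dist_norm norm_minus_commute field_simps)
    ultimately show False using link[of u] p that unfolding mem_thick_Psi_iff by blast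
  qed
  then show "(INF u. ereal (expected p (L u))) <
      (INF u\<in>{u. \<psi> u \<notin> prop_of l p}. ereal (expected p (L u)))"
    unfolding ereal_INF_gap_iff[where f = "\<lambda>u. expected p (L u)", OF min] using \<open>\<delta> > 0\<close> by blast
qed

end

theorem theorem9:
  fixes L :: "real^'d \<Rightarrow> 'y::finite \<Rightarrow> real"
    and l :: "'r::finite \<Rightarrow> 'y \<Rightarrow> real"
    and N :: "real^'d \<Rightarrow> real"
    and \<psi> :: "real^'d \<Rightarrow> 'r"
  assumes "polyhedral_loss L"
    and "discrete_loss l"
    and "is_norm N"
  shows "calibrated L \<psi> l \<longleftrightarrow>
         (\<exists>\<epsilon>>0. produced_by_thickened_link L (prop_of l) \<epsilon> N \<psi>)"
proof -
  obtain pieces where "max_affine_loss L pieces"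
    using polyhedral_loss_max_affine_loss[OF assms(1)] by blast
  then interpret max_affine_loss L pieces .
  have "nonneg_loss L" using assms(1) unfolding polyhedral_loss_def by blast
  then show ?thesis
    using calibrated_imp_thickened_link[OF assms(3)] thickened_link_imp_calibrated by blast
qed

end
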